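(* Let $\mathcal A$ be a category of cubes. For any $q\geq0$, the canonical map $\mathcal{A}[q]\to\mathrm{cosk}^\mathcal{A}_1(\mathcal{A}[q]_{\leq1})$ induced by the isomorphism $\mathcal{A}[q]_{\leq 1}\cong\mathcal{A}[q]_{\leq1}$ is an inclusion of presheaves. For $q=0$ or $q=1$ this inclusion is an equality, for any category of cubes $\mathcal{A}$.
   Context: $[0]=\{()\}$, $[n]=\{0,1\}^n$ ($n\ge1$) with the product order; ${\rm PoSet}$: posets with strictly increasing maps. Face maps $\delta_i^\alpha:[n-1]\to[n]$ insert $\alpha$ at position $i$; $\square$ is the subcategory of ${\rm PoSet}$ with objects $[n]$ generated by face maps. A map is adjacency-preserving if strictly increasing and it sends pairs at Hamming distance $1$ to pairs at Hamming distance $1$. A category of cubes is a subcategory $\mathcal A\subset{\rm PoSet}$ with objects $\{[n]:n\ge0\}$, containing $\square$, with all morphisms adjacency-preserving. $\mathcal A$-sets are presheaves on $\mathcal A$; $\mathcal A[q]=\mathcal A(-,[q])$; $K_{\le1}$ denotes restriction of $K$ to the full subcategory on $[0],[1]$; $\mathrm{cosk}_1^{\mathcal A}$ is the right adjoint of this truncation functor, and the canonical map $K\to\mathrm{cosk}_1^{\mathcal A}(K_{\le1})$ is the unit of the adjunction. *)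

theory Defs
  imports "HOL-Library.FuncSet"
begin

text \<open>The cube [n] = {0,1}^n, represented as boolean lists of length n
  (False = 0, True = 1); [0] = {[]}.\<close>
definition cube :: "nat \<Rightarrow> bool list set" where
  "cube n = {xs. length xs = n}"

definition cube_le :: "bool list \<Rightarrow> bool list \<Rightarrow> bool" where
  "cube_le xs ys \<longleftrightarrow> list_all2 (\<le>) xs ys"

definition cube_less :: "bool list \<Rightarrow> bool list \<Rightarrow> bool" where
  "cube_less xs ys \<longleftrightarrow> cube_le xs ys \<and> xs \<noteq> ys"

definition hamming :: "bool list \<Rightarrow> bool list \<Rightarrow> nat" where
  "hamming xs ys = card {i. i < length xs \<and> xs ! i \<noteq> ys ! i}"

text \<open>Face map delta_i^a : [n] -> [n+1], inserting a at position i (0-based, i \<le> n).\<close>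
definition face :: "nat \<Rightarrow> nat \<Rightarrow> bool \<Rightarrow> bool list \<Rightarrow> bool list" where
  "face n i a = restrict (\<lambda>xs. take i xs @ a # drop i xs) (cube n)"

definition strictly_increasing :: "nat \<Rightarrow> (bool list \<Rightarrow> bool list) \<Rightarrow> bool" where
  "strictly_increasing m f \<longleftrightarrow>
     (\<forall>x\<in>cube m. \<forall>y\<in>cube m. cube_less x y \<longrightarrow> cube_less (f x) (f y))"

definition adjacency_preserving :: "nat \<Rightarrow> (bool list \<Rightarrow> bool list) \<Rightarrow> bool" where
  "adjacency_preserving m f \<longleftrightarrow> strictly_increasing m f \<and>
     (\<forall>x\<in>cube m. \<forall>y\<in>cube m. hamming x y = 1 \<longrightarrow> hamming (f x) (f y) = 1)"

text \<open>A category of cubes: A m n is the set of morphisms [m] -> [n], represented as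
  extensional functions on cube m.\<close>
definition category_of_cubes :: "(nat \<Rightarrow> nat \<Rightarrow> (bool list \<Rightarrow> bool list) set) \<Rightarrow> bool" where
  "category_of_cubes A \<longleftrightarrow>
     (\<forall>m n. A m n \<subseteq> cube m \<rightarrow>\<^sub>E cube n) \<and>
     (\<forall>n. restrict id (cube n) \<in> A n n) \<and>
     (\<forall>l m n f g. f \<in> A l m \<longrightarrow> g \<in> A m n \<longrightarrow> compose (cube l) g f \<in> A l n) \<and>
     (\<forall>n i a. i \<le> n \<longrightarrow> face n i a \<in> A n (Suc n)) \<and>
     (\<forall>m n f. f \<in> A m n \<longrightarrow> adjacency_preserving m f)"

text \<open>Sections of cosk_1(A[q]_{\<le>1}) in degree n: natural transformations
  A[n]_{\<le>1} -> A[q]_{\<le>1}, i.e. families (phi_0, phi_1), phi_k : A(k,n) -> A(k,q),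
  natural with respect to all morphisms of A between [0] and [1].\<close>
definition cosk1_rep :: "(nat \<Rightarrow> nat \<Rightarrow> (bool list \<Rightarrow> bool list) set) \<Rightarrow> nat \<Rightarrow> nat
    \<Rightarrow> (nat \<Rightarrow> (bool list \<Rightarrow> bool list) \<Rightarrow> (bool list \<Rightarrow> bool list)) set" where
  "cosk1_rep A q n =
     {\<phi> \<in> (\<Pi>\<^sub>E k\<in>{0,1}. A k n \<rightarrow>\<^sub>E A k q).
        \<forall>j\<in>{0,1}. \<forall>k\<in>{0,1}. \<forall>h\<in>A j k. \<forall>g\<in>A k n.
          \<phi> j (compose (cube j) g h) = compose (cube j) (\<phi> k g) h}"

text \<open>The unit A[q] -> cosk_1(A[q]_{\<le>1}) in degree n: restriction of f : [n] -> [q]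
  (a map of presheaves A[n] -> A[q] by Yoneda) to the 1-truncation.\<close>
definition cosk1_unit :: "(nat \<Rightarrow> nat \<Rightarrow> (bool list \<Rightarrow> bool list) set) \<Rightarrow> nat \<Rightarrow> nat
    \<Rightarrow> (bool list \<Rightarrow> bool list) \<Rightarrow> (nat \<Rightarrow> (bool list \<Rightarrow> bool list) \<Rightarrow> (bool list \<Rightarrow> bool list))" where
  "cosk1_unit A q n f = (\<lambda>k\<in>{0,1}. \<lambda>g\<in>A k n. compose (cube k) f g)"

end

theory Submission
  imports Defs
begin

text \<open>A map \<open>f : [n] \<rightarrow> [q]\<close> is determined by its composites with the vertices
  \<open>[0] \<rightarrow> [n]\<close>, which the unit retains; this gives injectivity.  For \<open>n \<le> 1\<close> the identity
  of \<open>[n]\<close> lies in the truncation, so by the Yoneda argument every element of the coskeleton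
  is the unit of its value at the identity.  For \<open>n \<ge> 2\<close> and \<open>q \<le> 1\<close> the coskeleton is
  empty: there is no morphism \<open>[1] \<rightarrow> [0]\<close>, and every morphism \<open>[1] \<rightarrow> [1]\<close> fixes both
  endpoints, whereas the edges \<open>x \<mapsto> x0z\<close> and \<open>x \<mapsto> 1xz\<close> of \<open>[n]\<close> meet at \<open>10z\<close>, so
  naturality would force the end of one image edge, \<open>1\<close>, to equal the start of the other, \<open>0\<close>.\<close>

definition vertex :: "bool list \<Rightarrow> bool list \<Rightarrow> bool list" where
  "vertex x = (\<lambda>_\<in>cube 0. x)"

lemma compose_restrict_id_left: "g \<in> X \<rightarrow>\<^sub>E Y \<Longrightarrow> compose X (restrict id Y) g = g"
  by (rule ext) (auto simp: compose_def PiE_def extensional_def)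

lemma cube_0: "cube 0 = {[]}"
  by (auto simp: cube_def)

lemma cube_1: "cube 1 = {[False], [True]}"
  by (auto simp: cube_def length_Suc_conv)

lemma cube_less_False_True: "cube_less [False] [True]"
  by (simp add: cube_less_def cube_le_def)

lemma strictly_increasing_from_cube_1:
  assumes "strictly_increasing 1 f"
  shows "cube_less (f [False]) (f [True])"
  using assms cube_less_False_True unfolding strictly_increasing_def cube_1 by blast

lemma not_strictly_increasing_cube_1_cube_0:
  assumes "strictly_increasing 1 f" and "f \<in> cube 1 \<rightarrow> cube 0"
  shows False
proof -
  have "f [False] = []" "f [True] = []"
    using assms(2) unfolding cube_0 cube_1 by blast+
  with strictly_increasing_from_cube_1[OF assms(1)] show False
    by (simp add: cube_less_def)
qed

lemma strictly_increasing_cube_1_cube_1: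
  assumes "strictly_increasing 1 f" and "f \<in> cube 1 \<rightarrow> cube 1"
  shows "f [False] = [False] \<and> f [True] = [True]"
proof -
  have "f [False] \<in> {[False], [True]}" "f [True] \<in> {[False], [True]}"
    using assms(2) unfolding cube_1 by blast+
  with strictly_increasing_from_cube_1[OF assms(1)] show ?thesis
    by (auto simp: cube_less_def cube_le_def)
qed

locale cube_category =
  fixes A :: "nat \<Rightarrow> nat \<Rightarrow> (bool list \<Rightarrow> bool list) set"
  assumes category_of_cubes: "category_of_cubes A"
begin

lemma morphism_PiE: "f \<in> A m n \<Longrightarrow> f \<in> cube m \<rightarrow>\<^sub>E cube n"
  using category_of_cubes unfolding category_of_cubes_def by (meson subsetD)

lemma id_morphism: "restrict id (cube n) \<in> A n n"
  using category_of_cubes by (simp add: category_of_cubes_def)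

lemma compose_morphism: "f \<in> A l m \<Longrightarrow> g \<in> A m n \<Longrightarrow> compose (cube l) g f \<in> A l n"
  using category_of_cubes by (simp add: category_of_cubes_def)

lemma face_morphism: "i \<le> n \<Longrightarrow> face n i a \<in> A n (Suc n)"
  using category_of_cubes by (simp add: category_of_cubes_def)

lemma morphism_strictly_increasing: "f \<in> A m n \<Longrightarrow> strictly_increasing m f"
  using category_of_cubes by (simp add: category_of_cubes_def adjacency_preserving_def)

lemma append_morphism: "(\<lambda>x\<in>cube k. x @ post) \<in> A k (k + length post)"
proof (induction post rule: rev_induct)
  case Nil
  have "(\<lambda>x\<in>cube k. x @ []) = restrict id (cube k)" by auto
  then show ?case using id_morphism[where n=k] by (simp only: list.size add_0_right)
next
  case (snoc a post)
  define m where "m = k + length post"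
  have "compose (cube k) (face m m a) (\<lambda>x\<in>cube k. x @ post) = (\<lambda>x\<in>cube k. x @ post @ [a])"
    by (rule ext) (auto simp: compose_def face_def cube_def m_def)
  moreover have "compose (cube k) (face m m a) (\<lambda>x\<in>cube k. x @ post) \<in> A k (Suc m)"
    by (rule compose_morphism[OF snoc[folded m_def] face_morphism[of m m a]]) simp
  ultimately have "(\<lambda>x\<in>cube k. x @ post @ [a]) \<in> A k (Suc m)" by metis
  then show ?case by (simp only: append_assoc length_append_singleton add_Suc_right m_def)
qed

lemma pad_morphism: "(\<lambda>x\<in>cube k. pre @ x @ post) \<in> A k (length pre + k + length post)"
proof (induction pre)
  case Nil
  then show ?case using append_morphism[where k=k and post=post]
    by (simp only: append_Nil add_0 list.size(3))
next
  case (Cons a pre)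
  define m where "m = length pre + k + length post"
  have "compose (cube k) (face m 0 a) (\<lambda>x\<in>cube k. pre @ x @ post)
      = (\<lambda>x\<in>cube k. (a # pre) @ x @ post)"
    by (rule ext) (auto simp: compose_def face_def cube_def m_def)
  moreover have "compose (cube k) (face m 0 a) (\<lambda>x\<in>cube k. pre @ x @ post) \<in> A k (Suc m)"
    by (rule compose_morphism[OF Cons[folded m_def] face_morphism[of 0 m a]]) simp
  moreover have "Suc m = length (a # pre) + k + length post" by (simp add: m_def)
  ultimately show ?case by metis
qed

lemma vertex_morphism:
  assumes "x \<in> cube n"
  shows "vertex x \<in> A 0 n"
proof -
  have "(\<lambda>y\<in>cube 0. x @ y @ []) = vertex x"
    by (rule ext) (auto simp: vertex_def cube_def)
  with pad_morphism[where pre=x and k=0 and post="[]"] assms show ?thesis by (simp add: cube_def)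
qed

lemma vertex_apply: "vertex x [] = x"
  by (simp add: vertex_def cube_def)

lemma compose_vertex: "compose (cube 0) g (vertex x) = vertex (g x)"
  by (rule ext) (simp add: compose_def vertex_def)

lemma no_morphism_1_0: "A 1 0 = {}"
  using morphism_strictly_increasing morphism_PiE not_strictly_increasing_cube_1_cube_0 by blast

lemma morphism_1_1_fixes_endpoints:
  "h \<in> A 1 1 \<Longrightarrow> h [False] = [False] \<and> h [True] = [True]"
  using morphism_strictly_increasing morphism_PiE strictly_increasing_cube_1_cube_1 by blast

lemma cosk1_repD:
  assumes "\<phi> \<in> cosk1_rep A q n"
  shows cosk1_rep_PiE: "\<phi> \<in> (\<Pi>\<^sub>E k\<in>{0,1}. A k n \<rightarrow>\<^sub>E A k q)"
    and cosk1_rep_natural: "\<And>j k h g. j \<in> {0,1} \<Longrightarrow> k \<in> {0,1} \<Longrightarrow> h \<in> A j k \<Longrightarrow> g \<in> A k n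
      \<Longrightarrow> \<phi> j (compose (cube j) g h) = compose (cube j) (\<phi> k g) h"
  using assms unfolding cosk1_rep_def by auto

lemma cosk1_rep_morphism:
  assumes "\<phi> \<in> cosk1_rep A q n" and "k \<in> {0,1}" and "g \<in> A k n"
  shows "\<phi> k g \<in> A k q"
  using PiE_mem[OF PiE_mem[OF cosk1_rep_PiE[OF assms(1)] assms(2)] assms(3)] .

lemma cosk1_rep_edge_at_vertex:
  assumes \<phi>: "\<phi> \<in> cosk1_rep A q n" and g: "g \<in> A 1 n" and v: "v \<in> cube 1"
  shows "\<phi> 1 g v = \<phi> 0 (vertex (g v)) []"
proof -
  have "\<phi> 0 (vertex (g v)) = compose (cube 0) (\<phi> 1 g) (vertex v)"
    using cosk1_rep_natural[OF \<phi> _ _ vertex_morphism[OF v] g] by (simp add: compose_vertex)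
  then show ?thesis by (simp add: compose_def vertex_def cube_0)
qed

lemma cosk1_unit_in_cosk1_rep:
  assumes f: "f \<in> A n q"
  shows "cosk1_unit A q n f \<in> cosk1_rep A q n"
  unfolding cosk1_rep_def
proof (intro CollectI conjI ballI)
  show "cosk1_unit A q n f \<in> (\<Pi>\<^sub>E k\<in>{0,1}. A k n \<rightarrow>\<^sub>E A k q)"
    unfolding cosk1_unit_def using compose_morphism[OF _ f] by auto
next
  fix j k h g assume "j \<in> {0,1::nat}" "k \<in> {0,1::nat}" and h: "h \<in> A j k" and g: "g \<in> A k n"
  moreover have "h \<in> cube j \<rightarrow> cube k" using morphism_PiE[OF h] by blast
  ultimately show "cosk1_unit A q n f j (compose (cube j) g h) =
      compose (cube j) (cosk1_unit A q n f k g) h"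
    using compose_morphism[OF h g] compose_assoc[of h "cube j" "cube k" f g]
    by (simp add: cosk1_unit_def)
qed

lemma inj_on_cosk1_unit: "inj_on (cosk1_unit A q n) (A n q)"
proof (rule inj_onI)
  fix f f' assume f: "f \<in> A n q" and f': "f' \<in> A n q"
    and eq: "cosk1_unit A q n f = cosk1_unit A q n f'"
  show "f = f'"
  proof (rule extensionalityI)
    show "f \<in> extensional (cube n)" "f' \<in> extensional (cube n)"
      using morphism_PiE[OF f] morphism_PiE[OF f'] by (auto simp: PiE_def)
  next
    fix x assume x: "x \<in> cube n"
    have "cosk1_unit A q n f 0 (vertex x) = cosk1_unit A q n f' 0 (vertex x)"
      using eq by simp
    then have "vertex (f x) = vertex (f' x)"
      using vertex_morphism[OF x] by (simp add: cosk1_unit_def compose_vertex)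
    then show "f x = f' x" by (metis vertex_apply)
  qed
qed

lemma cosk1_rep_eq_cosk1_unit_of_id:
  assumes n: "n \<le> 1" and \<phi>: "\<phi> \<in> cosk1_rep A q n"
  shows "\<phi> = cosk1_unit A q n (\<phi> n (restrict id (cube n)))"
proof (rule ext, rule ext)
  fix k g
  have n01: "n \<in> {0,1}" using n by auto
  show "\<phi> k g = cosk1_unit A q n (\<phi> n (restrict id (cube n))) k g"
  proof (cases "k \<in> {0,1} \<and> g \<in> A k n")
    case False
    then show ?thesis
      using cosk1_rep_PiE[OF \<phi>] by (auto simp: cosk1_unit_def PiE_def extensional_def)
  next
    case True
    then have k: "k \<in> {0,1}" and g: "g \<in> A k n" by auto
    have "\<phi> k g = \<phi> k (compose (cube k) (restrict id (cube n)) g)"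
      using compose_restrict_id_left[OF morphism_PiE[OF g]] by simp
    also have "\<dots> = compose (cube k) (\<phi> n (restrict id (cube n))) g"
      by (rule cosk1_rep_natural[OF \<phi> k n01 g id_morphism])
    finally show ?thesis using k g by (simp add: cosk1_unit_def)
  qed
qed

lemma cosk1_rep_subset_cosk1_unit_image:
  assumes "n \<le> 1"
  shows "cosk1_rep A q n \<subseteq> cosk1_unit A q n ` A n q"
proof
  fix \<phi> assume \<phi>: "\<phi> \<in> cosk1_rep A q n"
  have "\<phi> n (restrict id (cube n)) \<in> A n q"
    using assms by (intro cosk1_rep_morphism[OF \<phi>] id_morphism) auto
  with cosk1_rep_eq_cosk1_unit_of_id[OF assms \<phi>] show "\<phi> \<in> cosk1_unit A q n ` A n q"
    by blast
qed

lemma cosk1_rep_0_empty: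
  assumes "n \<ge> 1"
  shows "cosk1_rep A 0 n = {}"
proof -
  have "(\<lambda>x\<in>cube 1. x @ replicate (n - 1) False) \<in> A 1 n"
    using append_morphism[where k=1 and post="replicate (n - 1) False"] assms by simp
  then show ?thesis
    using cosk1_rep_morphism[of _ 0 n 1] no_morphism_1_0 by blast
qed

lemma cosk1_rep_1_empty:
  assumes "n \<ge> 2"
  shows "cosk1_rep A 1 n = {}"
proof (rule ccontr)
  assume "cosk1_rep A 1 n \<noteq> {}"
  then obtain \<phi> where \<phi>: "\<phi> \<in> cosk1_rep A 1 n" by blast
  define zs where "zs = replicate (n - 2) False"
  define g1 where "g1 = (\<lambda>x\<in>cube 1. x @ False # zs)"
  define g2 where "g2 = (\<lambda>x\<in>cube 1. True # x @ zs)"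
  have g1: "g1 \<in> A 1 n" and g2: "g2 \<in> A 1 n"
    using pad_morphism[where pre="[]" and k=1 and post="False # zs"]
      pad_morphism[where pre="[True]" and k=1 and post=zs] assms
    unfolding g1_def g2_def zs_def by (simp_all add: Suc_diff_Suc numeral_2_eq_2)
  have T: "[True] \<in> cube 1" and F: "[False] \<in> cube 1" by (simp_all add: cube_def)
  have "g1 [True] = g2 [False]" by (simp add: g1_def g2_def cube_def)
  then have "\<phi> 1 g1 [True] = \<phi> 1 g2 [False]"
    using cosk1_rep_edge_at_vertex[OF \<phi> g1 T] cosk1_rep_edge_at_vertex[OF \<phi> g2 F] by simp
  moreover have "\<phi> 1 g1 [True] = [True]" "\<phi> 1 g2 [False] = [False]"
    using morphism_1_1_fixes_endpoints cosk1_rep_morphism[OF \<phi> _ g1] cosk1_rep_morphism[OF \<phi> _ g2]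
    by simp_all
  ultimately show False by simp
qed

end

theorem proposition7p2:
  assumes "category_of_cubes A"
  shows "(\<forall>q n. cosk1_unit A q n ` A n q \<subseteq> cosk1_rep A q n
              \<and> inj_on (cosk1_unit A q n) (A n q))
         \<and> (\<forall>q n. q \<le> 1 \<longrightarrow> cosk1_unit A q n ` A n q = cosk1_rep A q n)"
proof -
  interpret cube_category A using assms by unfold_locales
  have unit_into: "cosk1_unit A q n ` A n q \<subseteq> cosk1_rep A q n" for q n
    using cosk1_unit_in_cosk1_rep by blast
  have "cosk1_rep A q n \<subseteq> cosk1_unit A q n ` A n q" if "q \<le> 1" for q n
  proof (cases "n \<le> 1")
    case True
    then show ?thesis by (rule cosk1_rep_subset_cosk1_unit_image)
  next
    case False
    with that have "cosk1_rep A q n = {}"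
      using cosk1_rep_0_empty cosk1_rep_1_empty by (cases q) auto
    then show ?thesis by simp
  qed
  with unit_into inj_on_cosk1_unit show ?thesis by blast
qed

end
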